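(* Let $\alpha\in\mathbb N$ and $n\ge 0$. The $(i,j)$-th entry ($0\le i,j\le n$) of the inverse of the matrix $(1/F_{\alpha+i+j})_{0\le i,j\le n}$ is $$(-1)^{n(\alpha+i+j)-\binom{i}{2}-\binom{j}{2}}F_{\alpha+i+j}\binom{\alpha+n+i}{n-j}_{\mathbb F}\binom{\alpha+n+j}{n-i}_{\mathbb F}\binom{\alpha+i+j-1}{i}_{\mathbb F}\binom{\alpha+i+j-1}{j}_{\mathbb F}.$$
   Context: $F_n$ are the Fibonacci numbers ($F_0=0,F_1=1,F_{n+1}=F_n+F_{n-1}$). The Fibonomial coefficients are $\binom{n}{k}_{\mathbb F}=\prod_{i=1}^k F_{n-i+1}/F_i$ for $0\le k\le n$ (empty product $=1$). *)

theory Defs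
  imports "HOL-Number_Theory.Fib" "Jordan_Normal_Form.Matrix"
begin

definition fibonomial :: "nat \<Rightarrow> nat \<Rightarrow> real" where
  "fibonomial n k = (\<Prod>i=1..k. real (fib (n - i + 1)) / real (fib i))"

end

(*
  Binet's formula sqrt 5 * F r = phi^r - psi^r says that sqrt 5 * F (a+i+j) is the 2x2 determinant
  of the points P i = (phi^(a+i), psi^(a+i)) and Q j = (psi^j, phi^j), so the matrix (1 / F (a+i+j))
  is sqrt 5 times the Cauchy matrix (1 / det (P i, Q j)).  A Cauchy matrix is inverted by the classical
  product formula, which after dehomogenisation is a partial fraction expansion (Lagrange interpolation
  at the nodes Q k).  Each determinant in that formula is +-sqrt 5 times a Fibonacci number:
  det (P j, P l) and det (Q k, Q m) give F |j-l| and F |k-m|, whose products are fibonorials, the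
  remaining products assemble into the four fibonomial coefficients, and the signs collect into the
  stated power of -1.
*)
theory Submission
  imports Defs "HOL-Computational_Algebra.Polynomial" "Jordan_Normal_Form.Determinant"
begin

lemma prod_atMost_remove_split:
  "j \<le> n \<Longrightarrow> (\<Prod>l\<in>{..n}-{j}. f l) = (\<Prod>l<j. f l) * (\<Prod>l\<in>{j<..n}. f l)"
  for f :: "nat \<Rightarrow> 'a::comm_monoid_mult"
proof -
  assume "j \<le> n"
  then have "{..n}-{j} = {..<j} \<union> {j<..n}" by auto
  moreover have "{..<j} \<inter> {j<..n} = {}" by auto
  ultimately show ?thesis by (simp add: prod.union_disjoint)
qed

lemma sum_lessThan_eq_choose_two: "(\<Sum>l<j. l) = j choose 2"
proof (cases j)
  case (Suc m)
  then have "(\<Sum>l<j. l) = (\<Sum>l\<le>m. l choose 1)"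
    by (simp add: lessThan_Suc_atMost)
  also have "\<dots> = Suc m choose Suc 1"
    by (rule sum_choose_upper)
  finally show ?thesis
    using Suc by (simp only: Suc_1)
qed simp

lemma two_mult_choose_two: "2 * (k choose 2) + k = k * k"
proof -
  have "even (k * (k - 1))" by auto
  then have "2 * (k choose 2) = k * (k - 1)"
    by (simp add: choose_two)
  then show ?thesis
    by (cases k) simp_all
qed

lemma neg_one_power_eq_power_int:
  assumes "even (int m - z)"
  shows "(-1::'a::division_ring) ^ m = (-1) powi z"
proof -
  from assms have "even m \<longleftrightarrow> even z"
    by presburger
  then show ?thesis
    by (simp add: power_int_minus_left minus_one_power_iff)
qed

lemma divide_neg_one_power: "x / ((-1) ^ e * y) = (-1) ^ e * (x / y)"
  for x y :: "'a::field"
  by (cases "even e") simp_all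

lemma lagrange_interpolation:
  fixes y :: "nat \<Rightarrow> 'a::field" and R :: "'a poly"
  assumes inj: "inj_on y {..n}" and deg: "degree R \<le> n"
  shows "R = (\<Sum>k\<le>n. smult (poly R (y k) / (\<Prod>m\<in>{..n}-{k}. y k - y m))
                              (\<Prod>m\<in>{..n}-{k}. [:- y m, 1:]))"
    (is "R = ?L")
proof (rule poly_eqI_degree)
  fix z assume "z \<in> y ` {..n}"
  then obtain i where i: "i \<le> n" and z: "z = y i" by auto
  have "poly ?L z = (\<Sum>k\<le>n. if k = i then poly R (y i) else 0)"
    unfolding poly_sum
  proof (intro sum.cong refl)
    fix k assume k: "k \<in> {..n}"
    show "poly (smult (poly R (y k) / (\<Prod>m\<in>{..n}-{k}. y k - y m)) (\<Prod>m\<in>{..n}-{k}. [:- y m, 1:])) z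
        = (if k = i then poly R (y i) else 0)"
    proof (cases "k = i")
      case True
      have "(\<Prod>m\<in>{..n}-{k}. y k - y m) \<noteq> 0"
        using inj k by (auto simp: inj_on_def)
      with True z show ?thesis by (simp add: poly_prod)
    next
      case False
      then have "(\<Prod>m\<in>{..n}-{k}. z - y m) = 0"
        using i z by (intro prod_zero) auto
      with False show ?thesis by (simp add: poly_prod)
    qed
  qed
  with i z show "poly R z = poly ?L z" by simp
next
  have "card (y ` {..n}) = Suc n"
    using inj by (simp add: card_image)
  then show "degree R < card (y ` {..n})" using deg by simp
  have "degree ?L \<le> n"
  proof (intro degree_sum_le finite_atMost order.trans[OF degree_smult_le])
    fix k assume "k \<in> {..n}"
    then show "degree (\<Prod>m\<in>{..n}-{k}. [:- y m, 1:]) \<le> n"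
      by (subst degree_prod_sum_eq) auto
  qed
  with \<open>card (y ` {..n}) = Suc n\<close> show "degree ?L < card (y ` {..n})" by simp
qed

lemma partial_fraction_expansion:
  fixes y :: "nat \<Rightarrow> 'a::field" and R :: "'a poly"
  assumes inj: "inj_on y {..n}" and deg: "degree R \<le> n" and s: "s \<notin> y ` {..n}"
  shows "poly R s / (\<Prod>m\<le>n. s - y m)
       = (\<Sum>k\<le>n. poly R (y k) / ((s - y k) * (\<Prod>m\<in>{..n}-{k}. y k - y m)))"
proof -
  have "poly R s / (\<Prod>m\<le>n. s - y m)
      = (\<Sum>k\<le>n. poly R (y k) / (\<Prod>m\<in>{..n}-{k}. y k - y m) * (\<Prod>m\<in>{..n}-{k}. s - y m))
        / (\<Prod>m\<le>n. s - y m)"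
    by (subst lagrange_interpolation[OF inj deg]) (simp add: poly_sum poly_prod)
  also have "\<dots> = (\<Sum>k\<le>n. poly R (y k) / ((s - y k) * (\<Prod>m\<in>{..n}-{k}. y k - y m)))"
    unfolding sum_divide_distrib
  proof (intro sum.cong refl)
    fix k assume "k \<in> {..n}"
    then have "(\<Prod>m\<le>n. s - y m) = (s - y k) * (\<Prod>m\<in>{..n}-{k}. s - y m)"
      by (simp add: prod.remove)
    moreover have "(\<Prod>m\<in>{..n}-{k}. s - y m) \<noteq> 0"
      using s by auto
    ultimately show "poly R (y k) / (\<Prod>m\<in>{..n}-{k}. y k - y m) * (\<Prod>m\<in>{..n}-{k}. s - y m)
        / (\<Prod>m\<le>n. s - y m) = poly R (y k) / ((s - y k) * (\<Prod>m\<in>{..n}-{k}. y k - y m))"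
      by simp
  qed
  finally show ?thesis .
qed

lemma cauchy_inverse_sum:
  fixes x y :: "nat \<Rightarrow> 'a::field"
  assumes x: "inj_on x {..n}" and y: "inj_on y {..n}"
    and xy: "x ` {..n} \<inter> y ` {..n} = {}" and i: "i \<le> n" and j: "j \<le> n"
  shows "(\<Sum>k\<le>n. 1 / (x i - y k) *
            ((\<Prod>l\<in>{..n}-{j}. y k - x l) * (\<Prod>m\<le>n. x j - y m)
             / ((\<Prod>m\<in>{..n}-{k}. y k - y m) * (\<Prod>l\<in>{..n}-{j}. x j - x l))))
       = (if i = j then 1 else 0)"
proof -
  \<comment> \<open>Partial fractions of \<open>R z / (\<Prod>m\<le>n. z - y m)\<close> at \<open>z = x i\<close>, where \<open>R\<close> vanishes at all \<open>x l\<close> with \<open>l \<noteq> j\<close>.\<close>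
  define R where "R = (\<Prod>l\<in>{..n}-{j}. [:- x l, 1:])"
  have poly_R: "poly R z = (\<Prod>l\<in>{..n}-{j}. z - x l)" for z
    by (simp add: R_def poly_prod)
  have deg_R: "degree R \<le> n"
    unfolding R_def using j by (subst degree_prod_sum_eq) auto
  have x_notin_y: "x i' \<notin> y ` {..n}" if "i' \<le> n" for i'
    using xy that by blast
  have "(\<Sum>k\<le>n. 1 / (x i - y k) *
            ((\<Prod>l\<in>{..n}-{j}. y k - x l) * (\<Prod>m\<le>n. x j - y m)
             / ((\<Prod>m\<in>{..n}-{k}. y k - y m) * (\<Prod>l\<in>{..n}-{j}. x j - x l))))
      = (\<Prod>m\<le>n. x j - y m) / (\<Prod>l\<in>{..n}-{j}. x j - x l)
        * (\<Sum>k\<le>n. poly R (y k) / ((x i - y k) * (\<Prod>m\<in>{..n}-{k}. y k - y m)))"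
    unfolding sum_distrib_left poly_R by (intro sum.cong refl) (simp add: field_simps)
  also have "\<dots> = (\<Prod>m\<le>n. x j - y m) / (\<Prod>l\<in>{..n}-{j}. x j - x l)
        * (poly R (x i) / (\<Prod>m\<le>n. x i - y m))"
    using partial_fraction_expansion[OF y deg_R x_notin_y[OF i]] by simp
  also have "\<dots> = (if i = j then 1 else 0)"
  proof (cases "i = j")
    case True
    have "(\<Prod>m\<le>n. x j - y m) \<noteq> 0" using x_notin_y[OF j] by auto
    moreover have "(\<Prod>l\<in>{..n}-{j}. x j - x l) \<noteq> 0" using x j by (auto simp: inj_on_def)
    ultimately show ?thesis using True by (simp add: poly_R)
  next
    case False
    then have "poly R (x i) = 0" using i by (auto simp: poly_R)
    with False show ?thesis by simp
  qed
  finally show ?thesis .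
qed

definition det2 :: "'a \<times> 'a \<Rightarrow> 'a \<times> 'a \<Rightarrow> 'a::comm_ring" where
  "det2 u v = fst u * snd v - snd u * fst v"

definition cauchy_mat :: "nat \<Rightarrow> (nat \<Rightarrow> 'a \<times> 'a) \<Rightarrow> (nat \<Rightarrow> 'a \<times> 'a) \<Rightarrow> 'a::field mat" where
  "cauchy_mat n P Q = mat (n+1) (n+1) (\<lambda>(i, k). 1 / det2 (P i) (Q k))"

definition cauchy_inverse_mat :: "nat \<Rightarrow> (nat \<Rightarrow> 'a \<times> 'a) \<Rightarrow> (nat \<Rightarrow> 'a \<times> 'a) \<Rightarrow> 'a::field mat" where
  "cauchy_inverse_mat n P Q = mat (n+1) (n+1) (\<lambda>(k, j).
     (\<Prod>l\<in>{..n}-{j}. det2 (Q k) (P l)) * (\<Prod>m\<le>n. det2 (P j) (Q m))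
     / ((\<Prod>m\<in>{..n}-{k}. det2 (Q k) (Q m)) * (\<Prod>l\<in>{..n}-{j}. det2 (P j) (P l))))"

lemma cauchy_inverse_mat_dims [simp]:
  "dim_row (cauchy_inverse_mat n P Q) = n+1" "dim_col (cauchy_inverse_mat n P Q) = n+1"
  by (simp_all add: cauchy_inverse_mat_def)

lemma prod_det2_dehomogenize:
  fixes u :: "'a::field \<times> 'a" and V :: "nat \<Rightarrow> 'a \<times> 'a"
  assumes "snd u \<noteq> 0" and "\<And>l. l \<in> A \<Longrightarrow> snd (V l) \<noteq> 0"
  shows "(\<Prod>l\<in>A. det2 u (V l))
       = snd u ^ card A * (\<Prod>l\<in>A. snd (V l)) * (\<Prod>l\<in>A. fst u / snd u - fst (V l) / snd (V l))"
proof -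
  have "(\<Prod>l\<in>A. det2 u (V l)) = (\<Prod>l\<in>A. snd u * (snd (V l) * (fst u / snd u - fst (V l) / snd (V l))))"
    using assms by (intro prod.cong refl) (simp add: det2_def field_simps)
  then show ?thesis by (simp add: prod.distrib mult.assoc)
qed

lemma cauchy_mat_mult_inverse:
  fixes P Q :: "nat \<Rightarrow> 'a::field \<times> 'a"
  assumes P: "\<And>i. i \<le> n \<Longrightarrow> snd (P i) \<noteq> 0" and Q: "\<And>k. k \<le> n \<Longrightarrow> snd (Q k) \<noteq> 0"
    and PQ: "\<And>i k. i \<le> n \<Longrightarrow> k \<le> n \<Longrightarrow> det2 (P i) (Q k) \<noteq> 0"
    and PP: "\<And>i l. i \<le> n \<Longrightarrow> l \<le> n \<Longrightarrow> i \<noteq> l \<Longrightarrow> det2 (P i) (P l) \<noteq> 0"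
    and QQ: "\<And>k m. k \<le> n \<Longrightarrow> m \<le> n \<Longrightarrow> k \<noteq> m \<Longrightarrow> det2 (Q k) (Q m) \<noteq> 0"
  shows "cauchy_mat n P Q * cauchy_inverse_mat n P Q = 1\<^sub>m (n+1)"
proof (rule eq_matI)
  fix i j assume "i < dim_row (1\<^sub>m (n+1))" "j < dim_col (1\<^sub>m (n+1))"
  then have i: "i \<le> n" and j: "j \<le> n" by auto
  define x where "x i = fst (P i) / snd (P i)" for i
  define y where "y k = fst (Q k) / snd (Q k)" for k
  have x_inj: "inj_on x {..n}"
    using PP P by (auto simp: inj_on_def x_def det2_def field_simps)
  have y_inj: "inj_on y {..n}"
    using QQ Q by (auto simp: inj_on_def y_def det2_def field_simps)
  have x_neq_y: "x i' \<noteq> y k" if "i' \<le> n" "k \<le> n" for i' k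
    using PQ[OF that] P[OF that(1)] Q[OF that(2)] by (auto simp: x_def y_def det2_def field_simps)
  then have xy: "x ` {..n} \<inter> y ` {..n} = {}" by blast
  have det2_PQ: "det2 (P i') (Q k) = snd (P i') * snd (Q k) * (x i' - y k)"
    if "i' \<le> n" "k \<le> n" for i' k
    using P[OF that(1)] Q[OF that(2)] by (simp add: det2_def x_def y_def field_simps)
  \<comment> \<open>Dehomogenising, all weights \<open>snd\<close> cancel except \<open>snd (P j) / snd (P i)\<close>, which is 1 on the diagonal.\<close>
  have summand: "1 / det2 (P i) (Q k) * cauchy_inverse_mat n P Q $$ (k, j)
      = snd (P j) / snd (P i) * (1 / (x i - y k) *
            ((\<Prod>l\<in>{..n}-{j}. y k - x l) * (\<Prod>m\<le>n. x j - y m)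
             / ((\<Prod>m\<in>{..n}-{k}. y k - y m) * (\<Prod>l\<in>{..n}-{j}. x j - x l))))"
    if k: "k \<le> n" for k
  proof -
    have D: "cauchy_inverse_mat n P Q $$ (k, j) =
       (\<Prod>l\<in>{..n}-{j}. det2 (Q k) (P l)) * (\<Prod>m\<le>n. det2 (P j) (Q m))
       / ((\<Prod>m\<in>{..n}-{k}. det2 (Q k) (Q m)) * (\<Prod>l\<in>{..n}-{j}. det2 (P j) (P l)))"
      using j k by (simp add: cauchy_inverse_mat_def)
    have QP: "(\<Prod>l\<in>{..n}-{j}. det2 (Q k) (P l))
        = snd (Q k) ^ n * (\<Prod>l\<in>{..n}-{j}. snd (P l)) * (\<Prod>l\<in>{..n}-{j}. y k - x l)"
      using j by (subst prod_det2_dehomogenize) (use P Q k in \<open>auto simp: x_def y_def\<close>)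
    have PQ': "(\<Prod>m\<le>n. det2 (P j) (Q m))
        = snd (P j) ^ (n+1) * (snd (Q k) * (\<Prod>m\<in>{..n}-{k}. snd (Q m))) * (\<Prod>m\<le>n. x j - y m)"
      using k by (subst prod_det2_dehomogenize) (use P Q j in \<open>auto simp: x_def y_def prod.remove\<close>)
    have QQ': "(\<Prod>m\<in>{..n}-{k}. det2 (Q k) (Q m))
        = snd (Q k) ^ n * (\<Prod>m\<in>{..n}-{k}. snd (Q m)) * (\<Prod>m\<in>{..n}-{k}. y k - y m)"
      using k by (subst prod_det2_dehomogenize) (use Q in \<open>auto simp: y_def\<close>)
    have PP': "(\<Prod>l\<in>{..n}-{j}. det2 (P j) (P l))
        = snd (P j) ^ n * (\<Prod>l\<in>{..n}-{j}. snd (P l)) * (\<Prod>l\<in>{..n}-{j}. x j - x l)"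
      using j by (subst prod_det2_dehomogenize) (use P in \<open>auto simp: x_def\<close>)
    have "(\<Prod>m\<in>{..n}-{k}. y k - y m) \<noteq> 0" "(\<Prod>l\<in>{..n}-{j}. x j - x l) \<noteq> 0"
      using x_inj y_inj j k by (auto simp: inj_on_def)
    moreover have "(\<Prod>m\<in>{..n}-{k}. snd (Q m)) \<noteq> 0" "(\<Prod>l\<in>{..n}-{j}. snd (P l)) \<noteq> 0"
      using P Q by auto
    ultimately show ?thesis
      unfolding D QP PQ' QQ' PP' det2_PQ[OF i k]
      using P[OF i] P[OF j] Q[OF k] x_neq_y[OF i k] by (simp add: field_simps)
  qed
  have "(cauchy_mat n P Q * cauchy_inverse_mat n P Q) $$ (i, j)
      = (\<Sum>k\<le>n. 1 / det2 (P i) (Q k) * cauchy_inverse_mat n P Q $$ (k, j))"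
    using i j by (auto simp: cauchy_mat_def scalar_prod_def atLeast0LessThan lessThan_Suc_atMost
        simp flip: Suc_eq_plus1 intro!: sum.cong)
  also have "\<dots> = snd (P j) / snd (P i) * (\<Sum>k\<le>n. 1 / (x i - y k) *
            ((\<Prod>l\<in>{..n}-{j}. y k - x l) * (\<Prod>m\<le>n. x j - y m)
             / ((\<Prod>m\<in>{..n}-{k}. y k - y m) * (\<Prod>l\<in>{..n}-{j}. x j - x l))))"
    unfolding sum_distrib_left by (intro sum.cong refl) (rule summand, simp)
  also have "\<dots> = snd (P j) / snd (P i) * (if i = j then 1 else 0)"
    by (simp only: cauchy_inverse_sum[OF x_inj y_inj xy i j])
  also have "\<dots> = 1\<^sub>m (n+1) $$ (i, j)"
    using i j P by simp
  finally show "(cauchy_mat n P Q * cauchy_inverse_mat n P Q) $$ (i, j) = 1\<^sub>m (n+1) $$ (i, j)" .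
qed (simp_all add: cauchy_mat_def cauchy_inverse_mat_def)

definition \<phi> :: real where "\<phi> = (1 + sqrt 5) / 2"
definition \<psi> :: real where "\<psi> = (1 - sqrt 5) / 2"

definition binet_point :: "nat \<Rightarrow> real \<times> real" where
  "binet_point r = (\<phi> ^ r, \<psi> ^ r)"

lemma phi_times_psi: "\<phi> * \<psi> = -1"
  by (simp add: \<phi>_def \<psi>_def field_simps)

lemma phi_power_minus_psi_power: "\<phi> ^ r - \<psi> ^ r = sqrt 5 * real (fib r)"
  using fib_closed_form[of r] by (simp add: \<phi>_def \<psi>_def)

lemma det2_antisym: "det2 v u = - det2 u v"
  by (simp add: det2_def algebra_simps)

lemma det2_swap_swap: "det2 (prod.swap u) (prod.swap v) = - det2 u v"
  by (simp add: det2_def algebra_simps)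

lemma det2_binet_point_swap: "det2 (binet_point r) (prod.swap (binet_point s)) = sqrt 5 * real (fib (r + s))"
  by (simp add: det2_def binet_point_def power_add flip: phi_power_minus_psi_power)

lemma det2_binet_point_add:
  "det2 (binet_point r) (binet_point (r + d)) = - ((-1) ^ r * sqrt 5 * real (fib d))"
proof -
  have "det2 (binet_point r) (binet_point (r + d)) = (\<phi> * \<psi>) ^ r * (\<psi> ^ d - \<phi> ^ d)"
    by (simp add: det2_def binet_point_def power_add power_mult_distrib algebra_simps)
  moreover have "\<psi> ^ d - \<phi> ^ d = - (sqrt 5 * real (fib d))"
    using phi_power_minus_psi_power[of d] by linarith
  ultimately show ?thesis
    by (simp add: phi_times_psi)
qed

lemma det2_binet_point_neq_0:
  assumes "r \<noteq> s" shows "det2 (binet_point r) (binet_point s) \<noteq> 0"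
proof -
  have nz: "det2 (binet_point p) (binet_point (p + d)) \<noteq> 0" if "d > 0" for p d
    using that by (simp add: det2_binet_point_add fib_neq_0_nat)
  show ?thesis
  proof (cases "r < s")
    case True
    with nz[of "s - r" r] show ?thesis by simp
  next
    case False
    with assms nz[of "r - s" s] show ?thesis
      by (subst det2_antisym) simp
  qed
qed

definition fibonorial :: "nat \<Rightarrow> real" where
  "fibonorial k = (\<Prod>i=1..k. real (fib i))"

lemma fibonorial_neq_0: "fibonorial k \<noteq> 0"
  unfolding fibonorial_def using fib_neq_0_nat by simp

lemma prod_lessThan_fib_diff: "(\<Prod>l<j. real (fib (j - l))) = fibonorial j"
  unfolding fibonorial_def
  by (rule prod.reindex_bij_witness[of _ "\<lambda>i. j - i" "\<lambda>l. j - l"]) (auto simp del: fib.simps)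

lemma prod_greaterThan_fib_diff: "(\<Prod>l\<in>{j<..n}. real (fib (l - j))) = fibonorial (n - j)"
  unfolding fibonorial_def
  by (rule prod.reindex_bij_witness[of _ "\<lambda>i. i + j" "\<lambda>l. l - j"]) (auto simp del: fib.simps)

lemma prod_det2_binet_point:
  assumes "j \<le> n"
  shows "(\<Prod>l\<in>{..n}-{j}. det2 (binet_point (a+j)) (binet_point (a+l)))
       = (-1) ^ (a*j + (j choose 2) + (a+j+1)*(n-j)) * sqrt 5 ^ n * fibonorial j * fibonorial (n-j)"
proof -
  have below: "(\<Prod>l<j. det2 (binet_point (a+j)) (binet_point (a+l)))
      = (-1) ^ (a*j + (j choose 2)) * sqrt 5 ^ j * fibonorial j"
  proof -
    have "(\<Prod>l<j. det2 (binet_point (a+j)) (binet_point (a+l)))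
        = (\<Prod>l<j. (-1) ^ (a+l) * sqrt 5 * real (fib (j - l)))"
    proof (intro prod.cong refl)
      fix l assume "l \<in> {..<j}"
      then have "a + j = (a + l) + (j - l)" by simp
      then show "det2 (binet_point (a+j)) (binet_point (a+l)) = (-1) ^ (a+l) * sqrt 5 * real (fib (j - l))"
        by (metis det2_antisym det2_binet_point_add minus_minus)
    qed
    moreover have "(\<Prod>l<j. (-1::real) ^ (a+l)) = (-1) ^ (a*j + (j choose 2))"
      by (simp add: sum.distrib sum_lessThan_eq_choose_two mult.commute flip: power_sum)
    ultimately show ?thesis
      by (simp add: prod.distrib prod_lessThan_fib_diff)
  qed
  have above: "(\<Prod>l\<in>{j<..n}. det2 (binet_point (a+j)) (binet_point (a+l)))
      = (-1) ^ ((a+j+1)*(n-j)) * sqrt 5 ^ (n-j) * fibonorial (n-j)"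
  proof -
    have "(\<Prod>l\<in>{j<..n}. det2 (binet_point (a+j)) (binet_point (a+l)))
        = (\<Prod>l\<in>{j<..n}. (-1) ^ (a+j+1) * sqrt 5 * real (fib (l - j)))"
    proof (intro prod.cong refl)
      fix l assume "l \<in> {j<..n}"
      then have "a + l = (a + j) + (l - j)" by simp
      then have "det2 (binet_point (a+j)) (binet_point (a+l)) = - ((-1) ^ (a+j) * sqrt 5 * real (fib (l - j)))"
        by (metis det2_binet_point_add)
      then show "det2 (binet_point (a+j)) (binet_point (a+l)) = (-1) ^ (a+j+1) * sqrt 5 * real (fib (l - j))"
        by simp
    qed
    also have "\<dots> = ((-1) ^ (a+j+1)) ^ (n-j) * sqrt 5 ^ (n-j) * fibonorial (n-j)"
      unfolding prod.distrib prod_greaterThan_fib_diff by simp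
    finally show ?thesis
      by (simp only: power_mult)
  qed
  have "sqrt 5 ^ n = sqrt 5 ^ j * (sqrt 5 ^ (n-j) :: real)"
    using assms by (simp flip: power_add)
  then show ?thesis
    unfolding prod_atMost_remove_split[OF assms] below above power_add[of "-1::real"]
    by (simp only: mult_ac)
qed

lemma prod_det2_swap_binet_point:
  assumes "j \<le> n"
  shows "(\<Prod>l\<in>{..n}-{j}. det2 (prod.swap (binet_point k)) (binet_point (a+l)))
       = (-1) ^ n * (sqrt 5 ^ n * (\<Prod>l\<in>{..n}-{j}. real (fib (a+k+l))))"
proof -
  have "(\<Prod>l\<in>{..n}-{j}. det2 (prod.swap (binet_point k)) (binet_point (a+l)))
      = (\<Prod>l\<in>{..n}-{j}. (-1) * (sqrt 5 * real (fib (a+k+l))))"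
    by (intro prod.cong refl) (simp add: det2_antisym[of "prod.swap _"] det2_binet_point_swap add_ac)
  also have "\<dots> = (\<Prod>l\<in>{..n}-{j}. -1) * ((\<Prod>l\<in>{..n}-{j}. sqrt 5) * (\<Prod>l\<in>{..n}-{j}. real (fib (a+k+l))))"
    by (simp only: prod.distrib)
  finally show ?thesis
    using assms by simp
qed

lemma prod_det2_binet_point_swap:
  "(\<Prod>m\<le>n. det2 (binet_point c) (prod.swap (binet_point m))) = sqrt 5 ^ (n+1) * (\<Prod>m\<le>n. real (fib (c+m)))"
  by (simp add: det2_binet_point_swap prod.distrib)

lemma prod_det2_swap_swap_binet_point:
  assumes "k \<le> n"
  shows "(\<Prod>m\<in>{..n}-{k}. det2 (prod.swap (binet_point k)) (prod.swap (binet_point m)))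
       = (-1) ^ n * ((-1) ^ ((k choose 2) + (k+1)*(n-k)) * (sqrt 5 ^ n * fibonorial k * fibonorial (n-k)))"
proof -
  have "(\<Prod>m\<in>{..n}-{k}. det2 (prod.swap (binet_point k)) (prod.swap (binet_point m)))
      = (\<Prod>m\<in>{..n}-{k}. (-1) * det2 (binet_point k) (binet_point m))"
    by (simp add: det2_swap_swap)
  also have "\<dots> = (\<Prod>m\<in>{..n}-{k}. -1) * (\<Prod>m\<in>{..n}-{k}. det2 (binet_point k) (binet_point m))"
    by (simp only: prod.distrib)
  also have "(\<Prod>m\<in>{..n}-{k}. det2 (binet_point k) (binet_point m))
      = (-1) ^ ((k choose 2) + (k+1)*(n-k)) * sqrt 5 ^ n * fibonorial k * fibonorial (n-k)"
    using prod_det2_binet_point[OF assms, of 0] by (simp only: mult_0 add_0)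
  finally show ?thesis
    using assms by (simp add: mult.assoc)
qed

lemma fibonomial_conv_fibonorial:
  "fibonomial m k = (\<Prod>i=1..k. real (fib (m - i + 1))) / fibonorial k"
  unfolding fibonomial_def fibonorial_def by (rule prod_dividef)

lemma fibonomial_eq_prod_greaterThan:
  assumes "j \<le> n"
  shows "fibonomial (c + n) (n - j) = (\<Prod>l\<in>{j<..n}. real (fib (c + l))) / fibonorial (n - j)"
proof -
  have "(\<Prod>i=1..n-j. real (fib (c + n - i + 1))) = (\<Prod>l\<in>{j<..n}. real (fib (c + l)))"
    by (rule prod.reindex_bij_witness[of _ "\<lambda>l. n + 1 - l" "\<lambda>i. n + 1 - i"])
       (use assms in \<open>auto simp: Suc_diff_le simp del: fib.simps\<close>)
  then show ?thesis
    by (simp add: fibonomial_conv_fibonorial)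
qed

lemma fibonomial_eq_prod_lessThan:
  assumes "c \<ge> 1"
  shows "fibonomial (c + j - 1) j = (\<Prod>l<j. real (fib (c + l))) / fibonorial j"
proof -
  have "(\<Prod>i=1..j. real (fib (c + j - 1 - i + 1))) = (\<Prod>l<j. real (fib (c + l)))"
    by (rule prod.reindex_bij_witness[of _ "\<lambda>l. j - l" "\<lambda>i. j - i"])
       (use assms in \<open>auto simp: Suc_diff_Suc simp del: fib.simps\<close>)
  then show ?thesis
    by (simp add: fibonomial_conv_fibonorial)
qed

lemma fibonomial_mult_fibonomial:
  assumes "c \<ge> 1" and "j \<le> n"
  shows "fibonomial (c + n) (n - j) * fibonomial (c + j - 1) j
       = (\<Prod>l\<in>{..n}-{j}. real (fib (c + l))) / (fibonorial (n - j) * fibonorial j)"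
  using fibonomial_eq_prod_greaterThan[OF assms(2), of c] fibonomial_eq_prod_lessThan[OF assms(1), of j]
  by (simp add: prod_atMost_remove_split[OF assms(2)])

text \<open>The first exponent collects the signs of \<open>prod_det2_swap_swap_binet_point\<close> and
  \<open>prod_det2_binet_point\<close>; the second is the one in the theorem.\<close>

lemma sign_exponent_parity:
  assumes k: "k \<le> n" and j: "j \<le> n"
  shows "even (int ((k choose 2) + (k+1)*(n-k) + (a*j + (j choose 2) + (a+j+1)*(n-j)))
           - (int n * int (a+k+j) - int (k choose 2) - int (j choose 2)))"
proof -
  have "int ((k+1)*(n-k)) = (int k + 1) * (int n - int k)"
    and "int ((a+j+1)*(n-j)) = (int a + int j + 1) * (int n - int j)"
    using k j by (simp_all add: of_nat_diff) (simp_all add: algebra_simps)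
  moreover have "2 * int (k choose 2) + int k = int k * int k"
    and "2 * int (j choose 2) + int j = int j * int j"
    using two_mult_choose_two[of k] two_mult_choose_two[of j] by (metis of_nat_add of_nat_mult of_nat_numeral)+
  ultimately have "int ((k choose 2) + (k+1)*(n-k) + (a*j + (j choose 2) + (a+j+1)*(n-j)))
           - (int n * int (a+k+j) - int (k choose 2) - int (j choose 2))
      = 2 * (int n - int k - int j)"
    by (simp add: algebra_simps)
  then show ?thesis by simp
qed

lemma fibonacci_cauchy_inverse_entry:
  assumes a: "a \<ge> 1" and k: "k \<le> n" and j: "j \<le> n"
  shows "(-1::real) powi (int n * int (a+k+j) - int (k choose 2) - int (j choose 2))
      * real (fib (a+k+j)) * fibonomial (a+n+k) (n-j) * fibonomial (a+n+j) (n-k)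
      * fibonomial (a+k+j-1) k * fibonomial (a+k+j-1) j
    = cauchy_inverse_mat n (\<lambda>i. binet_point (a+i)) (\<lambda>m. prod.swap (binet_point m)) $$ (k, j) / sqrt 5"
proof -
  define ek where "ek = (k choose 2) + (k+1)*(n-k)"
  define ej where "ej = a*j + (j choose 2) + (a+j+1)*(n-j)"
  define Fk where "Fk = (\<Prod>l\<in>{..n}-{j}. real (fib (a+k+l)))"
  define Fj where "Fj = (\<Prod>m\<in>{..n}-{k}. real (fib (a+j+m)))"
  have "(\<Prod>m\<le>n. real (fib (a+j+m))) = real (fib (a+k+j)) * Fj"
    using k by (simp add: Fj_def prod.remove add_ac)
  then have products:
    "(\<Prod>l\<in>{..n}-{j}. det2 (prod.swap (binet_point k)) (binet_point (a+l))) = (-1) ^ n * (sqrt 5 ^ n * Fk)"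
    "(\<Prod>m\<le>n. det2 (binet_point (a+j)) (prod.swap (binet_point m))) = sqrt 5 ^ (n+1) * (real (fib (a+k+j)) * Fj)"
    "(\<Prod>m\<in>{..n}-{k}. det2 (prod.swap (binet_point k)) (prod.swap (binet_point m)))
       = (-1) ^ n * ((-1) ^ ek * (sqrt 5 ^ n * fibonorial k * fibonorial (n-k)))"
    "(\<Prod>l\<in>{..n}-{j}. det2 (binet_point (a+j)) (binet_point (a+l)))
       = (-1) ^ ej * (sqrt 5 ^ n * fibonorial j * fibonorial (n-j))"
    unfolding Fk_def ek_def ej_def
    by (simp_all add: prod_det2_swap_binet_point[OF j] prod_det2_binet_point_swap
        prod_det2_swap_swap_binet_point[OF k] prod_det2_binet_point[OF j] mult.assoc)
  have fibonomials:
    "fibonomial (a+n+k) (n-j) * fibonomial (a+k+j-1) j = Fk / (fibonorial (n-j) * fibonorial j)"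
    "fibonomial (a+n+j) (n-k) * fibonomial (a+k+j-1) k = Fj / (fibonorial (n-k) * fibonorial k)"
    using fibonomial_mult_fibonomial[of "a+k" j n] fibonomial_mult_fibonomial[of "a+j" k n] a j k
    by (simp_all add: Fk_def Fj_def add_ac)
  have sign: "(-1::real) powi (int n * int (a+k+j) - int (k choose 2) - int (j choose 2)) = (-1) ^ ek * (-1) ^ ej"
    unfolding ek_def ej_def power_add[symmetric]
    by (rule neg_one_power_eq_power_int[symmetric], rule sign_exponent_parity[OF k j])
  have "(-1::real) powi (int n * int (a+k+j) - int (k choose 2) - int (j choose 2))
      * real (fib (a+k+j)) * fibonomial (a+n+k) (n-j) * fibonomial (a+n+j) (n-k)
      * fibonomial (a+k+j-1) k * fibonomial (a+k+j-1) j
    = (-1) ^ ek * (-1) ^ ej * real (fib (a+k+j))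
      * (fibonomial (a+n+k) (n-j) * fibonomial (a+k+j-1) j)
      * (fibonomial (a+n+j) (n-k) * fibonomial (a+k+j-1) k)"
    unfolding sign by (simp only: mult_ac)
  also have "\<dots> = (-1) ^ ek * (-1) ^ ej * real (fib (a+k+j))
      * (Fk / (fibonorial (n-j) * fibonorial j)) * (Fj / (fibonorial (n-k) * fibonorial k))"
    unfolding fibonomials ..
  also have "\<dots> = (-1) ^ n * (sqrt 5 ^ n * Fk) * (sqrt 5 ^ (n+1) * (real (fib (a+k+j)) * Fj))
        / ((-1) ^ n * ((-1) ^ ek * (sqrt 5 ^ n * fibonorial k * fibonorial (n-k)))
           * ((-1) ^ ej * (sqrt 5 ^ n * fibonorial j * fibonorial (n-j)))) / sqrt 5"
    by (simp add: divide_neg_one_power fibonorial_neq_0 field_simps power_add)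
  also have "\<dots> = cauchy_inverse_mat n (\<lambda>i. binet_point (a+i)) (\<lambda>m. prod.swap (binet_point m)) $$ (k, j) / sqrt 5"
    using k j by (simp add: cauchy_inverse_mat_def products)
  finally show ?thesis .
qed

lemma fibonacci_cauchy_mat_mult_inverse:
  assumes "a \<ge> 1"
  shows "cauchy_mat n (\<lambda>i. binet_point (a+i)) (\<lambda>m. prod.swap (binet_point m))
       * cauchy_inverse_mat n (\<lambda>i. binet_point (a+i)) (\<lambda>m. prod.swap (binet_point m)) = 1\<^sub>m (n+1)"
proof (rule cauchy_mat_mult_inverse)
  have "\<phi> \<noteq> 0" "\<psi> \<noteq> 0"
    using phi_times_psi by auto
  then show "snd (binet_point (a+i)) \<noteq> 0" "snd (prod.swap (binet_point i)) \<noteq> 0" for i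
    by (simp_all add: binet_point_def)
  show "det2 (binet_point (a+i)) (prod.swap (binet_point k)) \<noteq> 0" for i k
    using assms by (simp add: det2_binet_point_swap fib_neq_0_nat)
  show "det2 (binet_point (a+i)) (binet_point (a+l)) \<noteq> 0" if "i \<noteq> l" for i l
    using that by (simp add: det2_binet_point_neq_0)
  show "det2 (prod.swap (binet_point k)) (prod.swap (binet_point m)) \<noteq> 0" if "k \<noteq> m" for k m
    using that by (simp add: det2_swap_swap det2_binet_point_neq_0)
qed

theorem theorem3p4:
  fixes \<alpha> n :: nat
  assumes "\<alpha> \<ge> 1"
  defines "H \<equiv> mat (n+1) (n+1) (\<lambda>(i,j). 1 / real (fib (\<alpha>+i+j)))"
      and "B \<equiv> mat (n+1) (n+1) (\<lambda>(i,j).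
              (-1::real) powi (int n * int (\<alpha>+i+j) - int (i choose 2) - int (j choose 2))
              * real (fib (\<alpha>+i+j))
              * fibonomial (\<alpha>+n+i) (n-j) * fibonomial (\<alpha>+n+j) (n-i)
              * fibonomial (\<alpha>+i+j-1) i * fibonomial (\<alpha>+i+j-1) j)"
  shows "H * B = 1\<^sub>m (n+1) \<and> B * H = 1\<^sub>m (n+1)"
proof -
  let ?C = "cauchy_mat n (\<lambda>i. binet_point (\<alpha>+i)) (\<lambda>m. prod.swap (binet_point m))"
  let ?D = "cauchy_inverse_mat n (\<lambda>i. binet_point (\<alpha>+i)) (\<lambda>m. prod.swap (binet_point m))"
  have C: "?C \<in> carrier_mat (n+1) (n+1)" and D: "?D \<in> carrier_mat (n+1) (n+1)"
    by (simp_all add: cauchy_mat_def cauchy_inverse_mat_def)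
  have H: "H = sqrt 5 \<cdot>\<^sub>m ?C"
    unfolding H_def by (rule eq_matI) (auto simp: cauchy_mat_def det2_binet_point_swap)
  have B: "B = (1 / sqrt 5) \<cdot>\<^sub>m ?D"
  proof (rule eq_matI)
    fix i j assume "i < dim_row ((1 / sqrt 5) \<cdot>\<^sub>m ?D)" "j < dim_col ((1 / sqrt 5) \<cdot>\<^sub>m ?D)"
    then show "B $$ (i, j) = ((1 / sqrt 5) \<cdot>\<^sub>m ?D) $$ (i, j)"
      using fibonacci_cauchy_inverse_entry[OF assms(1), of i n j] by (simp add: B_def)
  qed (simp_all add: B_def)
  have "H * B = sqrt 5 \<cdot>\<^sub>m ((1 / sqrt 5) \<cdot>\<^sub>m (?C * ?D))"
    unfolding H B mult_smult_assoc_mat[OF C smult_carrier_mat[OF D]] mult_smult_distrib[OF C D] ..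
  also have "\<dots> = 1\<^sub>m (n+1)"
    unfolding fibonacci_cauchy_mat_mult_inverse[OF assms(1)] by (rule eq_matI) auto
  finally have "H * B = 1\<^sub>m (n+1)" .
  moreover have "H \<in> carrier_mat (n+1) (n+1)" "B \<in> carrier_mat (n+1) (n+1)"
    by (simp_all add: H_def B_def)
  ultimately show ?thesis
    using mat_mult_left_right_inverse by blast
qed

end
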